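(* Let $\mathcal W$ be a monotonic game on $[n]$, $i\neq j$ players, and $\hat{\mathcal W}$ the game obtained by imposing a symmetric weak quarrel between $i$ and $j$. Then the Penrose–Banzhaf measure satisfies $\hat\psi^{PB}_i\le\psi^{PB}_i$ and $\hat\psi^{PB}_j\le\psi^{PB}_j$, where $\psi^{PB}$ and $\hat\psi^{PB}$ denote the measure computed in $\mathcal W$ and $\hat{\mathcal W}$ respectively.
   Context: Players are $[n]=\{1,\dots,n\}$. A binary voting game on $[n]$ is identified with its collection $\mathcal W\subseteq 2^{[n]}$ of winning sets ($S\in\mathcal W$ means the division in which exactly the members of $S$ vote YES has outcome YES). It is monotonic if $T\subseteq S$ and $T\in\mathcal W$ imply $S\in\mathcal W$. Player $i$ is YES-decisive for $S$ in a game $\mathcal W$ if $i\in S$, $S\in\mathcal W$ and $S\setminus\{i\}\notin\mathcal W$. Symmetric weak quarrel between $i$ and $j$: for every $S\subseteq[n]\setminus\{i,j\}$, $S\cup\{i,j\}\in\hat{\mathcal W}\iff (S\cup\{i\}\in\mathcal W\text{ or }S\cup\{j\}\in\mathcal W)$; $S\in\hat{\mathcal W}\iff (S\cup\{i\}\in\mathcal W\text{ and }S\cup\{j\}\in\mathcal W)$; $S\cup\{i\}\in\hat{\mathcal W}\iff S\cup\{i\}\in\mathcal W$; $S\cup\{j\}\in\hat{\mathcal W}\iff S\cup\{j\}\in\mathcal W$. Penrose–Banzhaf measure: $\psi^{PB}_i=\frac{1}{2^{n-1}}\#\{S\subseteq[n]: i\in S,\ i\text{ is YES-decisive for }S\}$.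 *)

theory Defs
  imports Complex_Main
begin

text \<open>Players are {1..n}; a game is its collection of winning sets, a family of subsets of {1..n}.\<close>

definition game :: "nat \<Rightarrow> nat set set \<Rightarrow> bool" where
  "game n W \<longleftrightarrow> W \<subseteq> Pow {1..n}"

definition monotonic :: "nat \<Rightarrow> nat set set \<Rightarrow> bool" where
  "monotonic n W \<longleftrightarrow> (\<forall>S T. S \<subseteq> {1..n} \<longrightarrow> T \<subseteq> S \<longrightarrow> T \<in> W \<longrightarrow> S \<in> W)"

definition yes_decisive :: "nat set set \<Rightarrow> nat \<Rightarrow> nat set \<Rightarrow> bool" where
  "yes_decisive W i S \<longleftrightarrow> i \<in> S \<and> S \<in> W \<and> S - {i} \<notin> W"

definition sym_weak_quarrel :: "nat \<Rightarrow> nat set set \<Rightarrow> nat \<Rightarrow> nat \<Rightarrow> nat set set \<Rightarrow> bool" where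
  "sym_weak_quarrel n W i j W' \<longleftrightarrow>
     (\<forall>S. S \<subseteq> {1..n} - {i, j} \<longrightarrow>
        (S \<union> {i, j} \<in> W' \<longleftrightarrow> (S \<union> {i} \<in> W \<or> S \<union> {j} \<in> W)) \<and>
        (S \<in> W' \<longleftrightarrow> (S \<union> {i} \<in> W \<and> S \<union> {j} \<in> W)) \<and>
        (S \<union> {i} \<in> W' \<longleftrightarrow> S \<union> {i} \<in> W) \<and>
        (S \<union> {j} \<in> W' \<longleftrightarrow> S \<union> {j} \<in> W))"

definition penrose_banzhaf :: "nat \<Rightarrow> nat set set \<Rightarrow> nat \<Rightarrow> real" where
  "penrose_banzhaf n W i =
     real (card {S. S \<subseteq> {1..n} \<and> i \<in> S \<and> yes_decisive W i S}) / 2 ^ (n - 1)"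

end

theory Submission
  imports Defs
begin

text \<open>Every division in which i is YES-decisive after the quarrel was already one in
which i is YES-decisive before it. Write the division as T \<union> {i} or
T \<union> {i, j} with T avoiding i, j. If j votes NO, the
quarrel keeps T \<union> {i} winning and makes T winning only when both
T \<union> {i} and T \<union> {j} win, so T \<union> {j} loses and, by
monotonicity, so does T. If j votes YES, T \<union> {j} loses in both games,
so the quarrel can only make T \<union> {i, j} win through T \<union> {i}, which by
monotonicity makes T \<union> {i, j} win in the original game. Hence the swing counts,
and with them the Penrose--Banzhaf measures, can only decrease.\<close>

lemma sym_weak_quarrel_commute:
  "sym_weak_quarrel n W i j W' \<Longrightarrow> sym_weak_quarrel n W j i W'"
  unfolding sym_weak_quarrel_def insert_commute[of j i] by blast

lemma yes_decisive_if_yes_decisive_sym_weak_quarrel: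
  assumes mono: "monotonic n W" and "i \<noteq> j" and "j \<in> {1..n}"
    and quarrel: "sym_weak_quarrel n W i j W'"
    and "S \<subseteq> {1..n}" and decisive': "yes_decisive W' i S"
  shows "yes_decisive W i S"
proof -
  define T where "T = S - {i, j}"
  have "T \<subseteq> {1..n} - {i, j}" using \<open>S \<subseteq> {1..n}\<close> T_def by auto
  then have quarrel_T:
      "T \<union> {i, j} \<in> W' \<longleftrightarrow> T \<union> {i} \<in> W \<or> T \<union> {j} \<in> W"
      "T \<in> W' \<longleftrightarrow> T \<union> {i} \<in> W \<and> T \<union> {j} \<in> W"
      "T \<union> {i} \<in> W' \<longleftrightarrow> T \<union> {i} \<in> W"
      "T \<union> {j} \<in> W' \<longleftrightarrow> T \<union> {j} \<in> W"
    using quarrel unfolding sym_weak_quarrel_def by blast+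
  have "i \<in> S" "S \<in> W'" "S - {i} \<notin> W'"
    using decisive' unfolding yes_decisive_def by auto
  show ?thesis
  proof (cases "j \<in> S")
    case True
    then have S: "S = T \<union> {i, j}" and S_minus: "S - {i} = T \<union> {j}"
      using \<open>i \<in> S\<close> \<open>i \<noteq> j\<close> T_def by auto
    have loses: "T \<union> {j} \<notin> W" using \<open>S - {i} \<notin> W'\<close> quarrel_T(4) S_minus by simp
    then have "T \<union> {i} \<in> W" using \<open>S \<in> W'\<close> quarrel_T(1) S by simp
    moreover have "T \<union> {i} \<subseteq> S" using S by blast
    ultimately have "S \<in> W"
      using mono \<open>S \<subseteq> {1..n}\<close> unfolding monotonic_def by blast
    then show ?thesis
      using S_minus loses \<open>i \<in> S\<close> unfolding yes_decisive_def by simp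
  next
    case False
    then have S: "S = T \<union> {i}" and S_minus: "S - {i} = T"
      using \<open>i \<in> S\<close> \<open>i \<noteq> j\<close> T_def by auto
    have wins: "T \<union> {i} \<in> W" using \<open>S \<in> W'\<close> quarrel_T(3) S by simp
    then have "T \<union> {j} \<notin> W"
      using \<open>S - {i} \<notin> W'\<close> quarrel_T(2) S_minus by simp
    moreover have "T \<union> {j} \<subseteq> {1..n}"
      using \<open>T \<subseteq> {1..n} - {i, j}\<close> \<open>j \<in> {1..n}\<close> by blast
    ultimately have "T \<notin> W" using mono unfolding monotonic_def by blast
    then show ?thesis
      using S S_minus wins \<open>i \<in> S\<close> unfolding yes_decisive_def by simp
  qed
qed

lemma penrose_banzhaf_mono:
  assumes "\<And>S. S \<subseteq> {1..n} \<Longrightarrow> yes_decisive W' i S \<Longrightarrow> yes_decisive W i S"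
  shows "penrose_banzhaf n W' i \<le> penrose_banzhaf n W i"
proof -
  have "{S. S \<subseteq> {1..n} \<and> i \<in> S \<and> yes_decisive W' i S}
      \<subseteq> {S. S \<subseteq> {1..n} \<and> i \<in> S \<and> yes_decisive W i S}"
    using assms by blast
  moreover have "finite {S. S \<subseteq> {1..n} \<and> i \<in> S \<and> yes_decisive W i S}"
    by (rule finite_subset[of _ "Pow {1..n}"]) auto
  ultimately show ?thesis
    unfolding penrose_banzhaf_def by (simp add: card_mono divide_right_mono)
qed

lemma penrose_banzhaf_sym_weak_quarrel_le:
  assumes "monotonic n W" and "i \<noteq> j" and "j \<in> {1..n}"
    and "sym_weak_quarrel n W i j W'"
  shows "penrose_banzhaf n W' i \<le> penrose_banzhaf n W i"
  using penrose_banzhaf_mono yes_decisive_if_yes_decisive_sym_weak_quarrel[OF assms] .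

theorem theorem15:
  fixes n :: nat and W W' :: "nat set set" and i j :: nat
  assumes "game n W" and "monotonic n W"
    and "i \<in> {1..n}" and "j \<in> {1..n}" and "i \<noteq> j"
    and "game n W'" and "sym_weak_quarrel n W i j W'"
  shows "penrose_banzhaf n W' i \<le> penrose_banzhaf n W i
       \<and> penrose_banzhaf n W' j \<le> penrose_banzhaf n W j"
  using penrose_banzhaf_sym_weak_quarrel_le[of n W i j W']
    penrose_banzhaf_sym_weak_quarrel_le[of n W j i W']
    sym_weak_quarrel_commute[of n W i j W'] assms(2-5,7)
  by simp

end
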